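(* $\mathrm{sdi\text{-}dist}$ is a semantic distance metric for CQs, and in fact an ultrametric, i.e., for all CQs $q_1,q_2,q_3$ of the same arity, $\mathrm{sdi\text{-}dist}(q_1,q_3)\le\max(\mathrm{sdi\text{-}dist}(q_1,q_2),\mathrm{sdi\text{-}dist}(q_2,q_3))$.
   Context: CQs are $q(x_1,\dots,x_k)\text{ :- }\alpha_1,\dots,\alpha_n$ (relational atoms, no constants, each answer variable occurring in an atom); $q(I)$ is the answer set on a finite database instance $I$; $q_1,q_2$ are equivalent if $q_1(I)=q_2(I)$ for all $I$. For CQs $q_1,q_2$ of the same arity, $\mathrm{sdi\text{-}dist}(q_1,q_2)=1/n$ where $n$ is the minimum number of facts of an instance $I$ with $q_1(I)\ne q_2(I)$, and $\mathrm{sdi\text{-}dist}(q_1,q_2)=0$ if no such instance exists. A semantic distance metric for CQs is a function $\mathrm{dist}$ from pairs of same-arity CQs to non-negative reals with $\mathrm{dist}(q_1,q_2)=\mathrm{dist}(q_2,q_1)$; $\mathrm{dist}(q_1,q_2)=0$ iff $q_1,q_2$ are equivalent; and $\mathrm{dist}(q_1,q_2)\le\mathrm{dist}(q_1,q_3)+\mathrm{dist}(q_3,q_2)$. *)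

theory Defs
  imports Main Complex_Main
begin

text \<open>An atom is a relation symbol applied to a tuple of variables (no constants).\<close>

type_synonym ('r, 'v) atom = "'r \<times> 'v list"

datatype ('r, 'v) cq = CQ (ans: "'v list") (body: "('r, 'v) atom list")

definition wf_cq :: "('r, 'v) cq \<Rightarrow> bool" where
  "wf_cq q \<longleftrightarrow> body q \<noteq> [] \<and>
     set (ans q) \<subseteq> (\<Union>a \<in> set (body q). set (snd a))"

definition cq_arity :: "('r, 'v) cq \<Rightarrow> nat" where
  "cq_arity q = length (ans q)"

type_synonym ('r, 'c) fact = "'r \<times> 'c list"

definition answers :: "('r, 'v) cq \<Rightarrow> ('r, 'c) fact set \<Rightarrow> 'c list set" where
  "answers q I = {map h (ans q) | h. \<forall>a \<in> set (body q). (fst a, map h (snd a)) \<in> I}"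

definition cq_equivalent :: "'c itself \<Rightarrow> ('r, 'v) cq \<Rightarrow> ('r, 'v) cq \<Rightarrow> bool" where
  "cq_equivalent (_ :: 'c itself) q1 q2 \<longleftrightarrow>
     (\<forall>I :: ('r, 'c) fact set. finite I \<longrightarrow> answers q1 I = answers q2 I)"

definition distinguishes :: "('r, 'v) cq \<Rightarrow> ('r, 'v) cq \<Rightarrow> ('r, 'c) fact set \<Rightarrow> bool" where
  "distinguishes q1 q2 I \<longleftrightarrow> finite I \<and> answers q1 I \<noteq> answers q2 I"

definition sdi_dist :: "'c itself \<Rightarrow> ('r, 'v) cq \<Rightarrow> ('r, 'v) cq \<Rightarrow> real" where
  "sdi_dist (_ :: 'c itself) q1 q2 =
     (if \<exists>I :: ('r, 'c) fact set. distinguishes q1 q2 I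
      then 1 / real (LEAST n. \<exists>I :: ('r, 'c) fact set. distinguishes q1 q2 I \<and> card I = n)
      else 0)"

definition semantic_distance_metric ::
  "'c itself \<Rightarrow> (('r, 'v) cq \<Rightarrow> ('r, 'v) cq \<Rightarrow> real) \<Rightarrow> bool" where
  "semantic_distance_metric C d \<longleftrightarrow>
     (\<forall>q1 q2. wf_cq q1 \<and> wf_cq q2 \<and> cq_arity q1 = cq_arity q2 \<longrightarrow>
        d q1 q2 \<ge> 0 \<and>
        d q1 q2 = d q2 q1 \<and>
        (d q1 q2 = 0 \<longleftrightarrow> cq_equivalent C q1 q2)) \<and>
     (\<forall>q1 q2 q3. wf_cq q1 \<and> wf_cq q2 \<and> wf_cq q3 \<and>
        cq_arity q1 = cq_arity q2 \<and> cq_arity q3 = cq_arity q1 \<longrightarrow>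
        d q1 q2 \<le> d q1 q3 + d q3 q2)"

end

theory Submission
  imports Defs
begin

(* An instance on which q1 and q3 have different answers must separate q2 from q1 or from q3.
   Hence the smallest instance distinguishing q1 and q3 is at least as large as the smallest one
   distinguishing q1, q2 or q2, q3, which is the ultrametric inequality; together with
   nonnegativity it implies the triangle inequality. Well-formedness enters only through the
   empty instance: a CQ with nonempty body has no answers on it, so distinguishing instances
   are nonempty and a positive distance is 1/n with n \<ge> 1. *)

lemma answers_empty_instance:
  assumes "wf_cq q"
  shows "answers q {} = {}"
  using assms unfolding wf_cq_def answers_def by (cases "body q") auto

lemma distinguishes_commute: "distinguishes q1 q2 = distinguishes q2 q1"
  unfolding distinguishes_def fun_eq_iff by auto

lemma distinguishes_card_pos:
  assumes "wf_cq q1" "wf_cq q2" "distinguishes q1 q2 I"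
  shows "card I > 0"
proof -
  have "I \<noteq> {}"
    using assms answers_empty_instance[of q1] answers_empty_instance[of q2]
    unfolding distinguishes_def by auto
  with assms(3) show ?thesis
    unfolding distinguishes_def by auto
qed

lemma distinguishes_via:
  assumes "distinguishes q1 q3 I"
  shows "distinguishes q1 q2 I \<or> distinguishes q2 q3 I"
  using assms unfolding distinguishes_def by auto

lemma cq_equivalent_iff_not_distinguishes:
  fixes q1 q2 :: "('r, 'v) cq"
  shows "cq_equivalent TYPE('c) q1 q2 \<longleftrightarrow> \<not> (\<exists>I :: ('r, 'c) fact set. distinguishes q1 q2 I)"
  unfolding cq_equivalent_def distinguishes_def by auto

lemma sdi_dist_nonneg: "sdi_dist C q1 q2 \<ge> 0"
  unfolding sdi_dist_def by auto

lemma sdi_dist_commute: "sdi_dist C q1 q2 = sdi_dist C q2 q1"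
  unfolding sdi_dist_def distinguishes_commute[of q1 q2] ..

lemma sdi_dist_indistinguishable:
  fixes q1 q2 :: "('r, 'v) cq"
  assumes "\<not> (\<exists>I :: ('r, 'c) fact set. distinguishes q1 q2 I)"
  shows "sdi_dist TYPE('c) q1 q2 = 0"
  unfolding sdi_dist_def using assms by (rule if_not_P)

lemma sdi_dist_minimal_instance:
  fixes q1 q2 :: "('r, 'v) cq" and I :: "('r, 'c) fact set"
  assumes "distinguishes q1 q2 I"
  obtains J :: "('r, 'c) fact set"
  where "distinguishes q1 q2 J" "card J \<le> card I" "sdi_dist TYPE('c) q1 q2 = 1 / real (card J)"
proof -
  let ?size = "\<lambda>n. \<exists>J :: ('r, 'c) fact set. distinguishes q1 q2 J \<and> card J = n"
  have "?size (card I)"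
    using assms by blast
  then obtain J :: "('r, 'c) fact set"
    where J: "distinguishes q1 q2 J" "card J = (LEAST n. ?size n)"
    using LeastI[of ?size] by blast
  have "card J \<le> card I"
    unfolding J(2) using \<open>?size (card I)\<close> by (rule Least_le)
  moreover have "sdi_dist TYPE('c) q1 q2 = 1 / real (card J)"
    unfolding sdi_dist_def J(2) using assms by auto
  ultimately show ?thesis
    using J(1) that by blast
qed

lemma sdi_dist_ge_inverse_card:
  fixes q1 q2 :: "('r, 'v) cq" and I :: "('r, 'c) fact set"
  assumes "wf_cq q1" "wf_cq q2" "distinguishes q1 q2 I"
  shows "1 / real (card I) \<le> sdi_dist TYPE('c) q1 q2"
proof -
  obtain J :: "('r, 'c) fact set"
    where J: "distinguishes q1 q2 J" "card J \<le> card I" "sdi_dist TYPE('c) q1 q2 = 1 / real (card J)"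
    using sdi_dist_minimal_instance[OF assms(3)] .
  have "card J > 0"
    using distinguishes_card_pos[OF assms(1,2) J(1)] .
  with J(2,3) show ?thesis
    by (simp add: frac_le)
qed

lemma sdi_dist_eq_0_iff:
  fixes q1 q2 :: "('r, 'v) cq"
  assumes "wf_cq q1" "wf_cq q2"
  shows "sdi_dist TYPE('c) q1 q2 = 0 \<longleftrightarrow> cq_equivalent TYPE('c) q1 q2"
proof
  assume dist_0: "sdi_dist TYPE('c) q1 q2 = 0"
  show "cq_equivalent TYPE('c) q1 q2"
    unfolding cq_equivalent_iff_not_distinguishes
  proof
    assume "\<exists>I :: ('r, 'c) fact set. distinguishes q1 q2 I"
    then obtain I :: "('r, 'c) fact set" where I: "distinguishes q1 q2 I" ..
    have "0 < 1 / real (card I)"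
      using distinguishes_card_pos[OF assms I] by simp
    also have "\<dots> \<le> sdi_dist TYPE('c) q1 q2"
      using sdi_dist_ge_inverse_card[OF assms I] .
    finally show False
      using dist_0 by simp
  qed
next
  assume "cq_equivalent TYPE('c) q1 q2"
  then show "sdi_dist TYPE('c) q1 q2 = 0"
    unfolding cq_equivalent_iff_not_distinguishes by (rule sdi_dist_indistinguishable)
qed

lemma sdi_dist_ultrametric:
  fixes q1 q2 q3 :: "('r, 'v) cq"
  assumes "wf_cq q1" "wf_cq q2" "wf_cq q3"
  shows "sdi_dist TYPE('c) q1 q3 \<le> max (sdi_dist TYPE('c) q1 q2) (sdi_dist TYPE('c) q2 q3)"
proof (cases "\<exists>I :: ('r, 'c) fact set. distinguishes q1 q3 I")
  case True
  then obtain I :: "('r, 'c) fact set"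
    where I: "distinguishes q1 q3 I" "sdi_dist TYPE('c) q1 q3 = 1 / real (card I)"
    using sdi_dist_minimal_instance by metis
  from distinguishes_via[OF I(1), of q2] show ?thesis
  proof
    assume "distinguishes q1 q2 I"
    with sdi_dist_ge_inverse_card[OF assms(1,2)] I(2) show ?thesis
      by fastforce
  next
    assume "distinguishes q2 q3 I"
    with sdi_dist_ge_inverse_card[OF assms(2,3)] I(2) show ?thesis
      by fastforce
  qed
next
  case False
  then show ?thesis
    using sdi_dist_indistinguishable sdi_dist_nonneg by (metis max.coboundedI1)
qed

lemma sdi_dist_triangle:
  fixes q1 q2 q3 :: "('r, 'v) cq"
  assumes "wf_cq q1" "wf_cq q2" "wf_cq q3"
  shows "sdi_dist TYPE('c) q1 q3 \<le> sdi_dist TYPE('c) q1 q2 + sdi_dist TYPE('c) q2 q3"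
  using sdi_dist_ultrametric[OF assms, where 'c = 'c] sdi_dist_nonneg[of "TYPE('c)" q1 q2]
    sdi_dist_nonneg[of "TYPE('c)" q2 q3]
  by linarith

theorem proposition44:
  assumes "infinite (UNIV :: 'c set)"
  shows "semantic_distance_metric TYPE('c) (sdi_dist TYPE('c) :: ('r, 'v) cq \<Rightarrow> ('r, 'v) cq \<Rightarrow> real)
    \<and> (\<forall>q1 q2 q3 :: ('r, 'v) cq. wf_cq q1 \<and> wf_cq q2 \<and> wf_cq q3 \<and>
          cq_arity q1 = cq_arity q2 \<and> cq_arity q2 = cq_arity q3 \<longrightarrow>
          sdi_dist TYPE('c) q1 q3 \<le> max (sdi_dist TYPE('c) q1 q2) (sdi_dist TYPE('c) q2 q3))"
  unfolding semantic_distance_metric_def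
  using sdi_dist_nonneg sdi_dist_commute sdi_dist_eq_0_iff sdi_dist_triangle sdi_dist_ultrametric
  by blast

end
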